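(* For every positive integer $n$ there exist integers $R$ and $m$ and a finite set $\Lambda\subset\mathbb{N}^m$ such that the following holds. If $G$ is a simply connected, simple, compact Lie group of rank $r\ge R$ and $\lambda$ is a dominant weight with $\chi_\lambda(1)\le r^n$, then either $G$ is of type $A_r$ and $$\lambda=a_1\varpi_1+\cdots+a_m\varpi_m+b_m\varpi_{r+1-m}+\cdots+b_1\varpi_r$$ for some $(a_1,\ldots,a_m),(b_1,\ldots,b_m)\in\Lambda$, or $G$ is of type $B_r$, $C_r$ or $D_r$ and $$\lambda=a_1\varpi_1+\cdots+a_m\varpi_m$$ for some $(a_1,\ldots,a_m)\in\Lambda$.
   Context: A compact Lie group is called simple if it is connected, has finite center, and is a simple group modulo its center. $\varpi_1,\ldots,\varpi_r$ are the fundamental weights, with simple roots numbered as in Bourbaki (for $A_r,B_r,C_r,D_r$, $\alpha_1$ is at the end of the Dynkin diagram away from the branch/double bond, $\alpha_i$ adjacent to $\alpha_{i+1}$). $\chi_\lambda$ denotes the irreducible character of $G$ with highest weight $\lambda$. $\mathbb{N}$ denotes the non-negative integers. *)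

theory Defs
  imports Complex_Main
begin

text \<open>Simply connected simple compact Lie groups of large rank are classified by their
Cartan type (A_r, B_r, C_r, D_r; exceptional types have rank at most 8).  Irreducible
characters correspond to dominant weights, written in the basis of fundamental weights
(Dynkin labels a 1, ..., a r), and the degree chi_lambda(1) is given by the Weyl
dimension formula.  We model the root systems concretely in the standard
epsilon-coordinates (Bourbaki numbering).\<close>

datatype ctype = TA | TB | TC | TD

text \<open>Admissible ranks for the classical types (to avoid coincidences in small rank).\<close>
fun valid_type :: "ctype \<Rightarrow> nat \<Rightarrow> bool" where
  "valid_type TA r = (r \<ge> 1)"
| "valid_type TB r = (r \<ge> 2)"
| "valid_type TC r = (r \<ge> 3)"
| "valid_type TD r = (r \<ge> 4)"

text \<open>Dimension of the ambient Euclidean space, coordinates indexed 1..amb.\<close>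
fun amb :: "ctype \<Rightarrow> nat \<Rightarrow> nat" where
  "amb TA r = r + 1"
| "amb TB r = r"
| "amb TC r = r"
| "amb TD r = r"

definition eps :: "nat \<Rightarrow> nat \<Rightarrow> real" where
  "eps i = (\<lambda>k. if k = i then 1 else 0)"

fun pos_roots :: "ctype \<Rightarrow> nat \<Rightarrow> (nat \<Rightarrow> real) set" where
  "pos_roots TA r = {(\<lambda>k. eps i k - eps j k) | i j. 1 \<le> i \<and> i < j \<and> j \<le> r + 1}"
| "pos_roots TB r = {(\<lambda>k. eps i k - eps j k) | i j. 1 \<le> i \<and> i < j \<and> j \<le> r}
     \<union> {(\<lambda>k. eps i k + eps j k) | i j. 1 \<le> i \<and> i < j \<and> j \<le> r}
     \<union> {eps i | i. 1 \<le> i \<and> i \<le> r}"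
| "pos_roots TC r = {(\<lambda>k. eps i k - eps j k) | i j. 1 \<le> i \<and> i < j \<and> j \<le> r}
     \<union> {(\<lambda>k. eps i k + eps j k) | i j. 1 \<le> i \<and> i < j \<and> j \<le> r}
     \<union> {(\<lambda>k. 2 * eps i k) | i. 1 \<le> i \<and> i \<le> r}"
| "pos_roots TD r = {(\<lambda>k. eps i k - eps j k) | i j. 1 \<le> i \<and> i < j \<and> j \<le> r}
     \<union> {(\<lambda>k. eps i k + eps j k) | i j. 1 \<le> i \<and> i < j \<and> j \<le> r}"

text \<open>Fundamental weights (Bourbaki numbering): j-th coordinate of varpi_i.
  (For A_r the weight is taken modulo the all-ones vector, irrelevant for pairings with roots.)\<close>
fun fund_weight :: "ctype \<Rightarrow> nat \<Rightarrow> nat \<Rightarrow> nat \<Rightarrow> real" where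
  "fund_weight TA r i j = (if j \<le> i then 1 else 0)"
| "fund_weight TB r i j = (if i < r then (if j \<le> i then 1 else 0) else 1/2)"
| "fund_weight TC r i j = (if j \<le> i then 1 else 0)"
| "fund_weight TD r i j =
     (if i + 2 \<le> r then (if j \<le> i then 1 else 0)
      else if i + 1 = r then (if j < r then 1/2 else -1/2)
      else 1/2)"

definition ip :: "ctype \<Rightarrow> nat \<Rightarrow> (nat \<Rightarrow> real) \<Rightarrow> (nat \<Rightarrow> real) \<Rightarrow> real" where
  "ip t r x y = (\<Sum>k\<in>{1..amb t r}. x k * y k)"

definition weight :: "ctype \<Rightarrow> nat \<Rightarrow> (nat \<Rightarrow> nat) \<Rightarrow> nat \<Rightarrow> real" where
  "weight t r a = (\<lambda>j. \<Sum>i\<in>{1..r}. real (a i) * fund_weight t r i j)"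

definition rho :: "ctype \<Rightarrow> nat \<Rightarrow> nat \<Rightarrow> real" where
  "rho t r = (\<lambda>k. (1/2) * (\<Sum>\<alpha>\<in>pos_roots t r. \<alpha> k))"

definition char_degree :: "ctype \<Rightarrow> nat \<Rightarrow> (nat \<Rightarrow> nat) \<Rightarrow> real" where
  "char_degree t r a =
     (\<Prod>\<alpha>\<in>pos_roots t r.
        ip t r (\<lambda>k. weight t r a k + rho t r k) \<alpha> / ip t r (rho t r) \<alpha>)"

end

theory Submission
  imports Defs
begin

text \<open>By the Weyl dimension formula the degree is the product over the positive roots \<alpha> of the
factors 1 + \<langle>\<lambda>,\<alpha>\<rangle>/\<langle>\<rho>,\<alpha>\<rangle> \<ge> 1.  If some label a_l is at least 2^e - 1, then every root \<alpha> with
\<langle>\<varpi>_l,\<alpha>\<rangle> \<ge> 1 contributes at least (1 + 1/\<langle>\<rho>,\<alpha>\<rangle>)^e.  Taking s rows of such roots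
\<epsilon>_i \<mp> \<epsilon>_j, for which the products along each row telescope, the degree is at least
(r/(4s+1))^(se).  Once r > (4n+5)^(n+1), the case s = 1, e = n + 1 bounds every label by
2^(n+1) - 1, and the case s = n + 1, e = 1 kills every label a_l with l > n + 1 (for A_r also
with l < r - n).\<close>

subsection \<open>Positive roots and the Weyl vector\<close>

definition root_minus :: "nat \<Rightarrow> nat \<Rightarrow> nat \<Rightarrow> real" where
  "root_minus i j = (\<lambda>k. eps i k - eps j k)"

definition root_plus :: "nat \<Rightarrow> nat \<Rightarrow> nat \<Rightarrow> real" where
  "root_plus i j = (\<lambda>k. eps i k + eps j k)"

definition root_double :: "nat \<Rightarrow> nat \<Rightarrow> real" where
  "root_double i = (\<lambda>k. 2 * eps i k)"

definition index_pairs :: "nat \<Rightarrow> (nat \<times> nat) set" where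
  "index_pairs N = {(i, j). 1 \<le> i \<and> i < j \<and> j \<le> N}"

lemma finite_index_pairs: "finite (index_pairs N)"
  by (rule finite_subset[of _ "{0..N} \<times> {0..N}"]) (auto simp: index_pairs_def)

lemma index_pairs_eq_Sigma: "index_pairs N = Sigma {1..N} (\<lambda>i. {i+1..N})"
  by (auto simp: index_pairs_def)

lemma pos_roots_TA: "pos_roots TA r = (\<lambda>(i, j). root_minus i j) ` index_pairs (r + 1)"
  by (auto simp: index_pairs_def root_minus_def image_def)

lemma pos_roots_TB:
  "pos_roots TB r = (\<lambda>(i, j). root_minus i j) ` index_pairs r
     \<union> (\<lambda>(i, j). root_plus i j) ` index_pairs r \<union> eps ` {1..r}"
  by (auto simp: index_pairs_def root_minus_def root_plus_def image_def)

lemma pos_roots_TC: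
  "pos_roots TC r = (\<lambda>(i, j). root_minus i j) ` index_pairs r
     \<union> (\<lambda>(i, j). root_plus i j) ` index_pairs r \<union> root_double ` {1..r}"
  by (auto simp: index_pairs_def root_minus_def root_plus_def root_double_def image_def)

lemma pos_roots_TD:
  "pos_roots TD r = (\<lambda>(i, j). root_minus i j) ` index_pairs r
     \<union> (\<lambda>(i, j). root_plus i j) ` index_pairs r"
  by (auto simp: index_pairs_def root_minus_def root_plus_def image_def)

lemmas pos_roots_eqs = pos_roots_TA pos_roots_TB pos_roots_TC pos_roots_TD

lemma finite_pos_roots: "finite (pos_roots t r)"
  by (cases t) (simp_all add: pos_roots_eqs finite_index_pairs del: pos_roots.simps)

lemma root_minus_eq_iff:
  assumes "i < j" "i' < j'"
  shows "root_minus i j = root_minus i' j' \<longleftrightarrow> i = i' \<and> j = j'"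
proof
  assume eq: "root_minus i j = root_minus i' j'"
  have "root_minus i j i = root_minus i' j' i" "root_minus i j j = root_minus i' j' j"
    using eq by simp_all
  then show "i = i' \<and> j = j'"
    using assms by (auto simp: root_minus_def eps_def split: if_splits)
qed simp

lemma root_plus_eq_iff:
  assumes "i < j" "i' < j'"
  shows "root_plus i j = root_plus i' j' \<longleftrightarrow> i = i' \<and> j = j'"
proof
  assume eq: "root_plus i j = root_plus i' j'"
  have "root_plus i j i = root_plus i' j' i" "root_plus i j j = root_plus i' j' j"
    using eq by simp_all
  then show "i = i' \<and> j = j'"
    using assms by (auto simp: root_plus_def eps_def split: if_splits)
qed simp

lemma inj_on_root_minus: "inj_on (\<lambda>(i, j). root_minus i j) (index_pairs N)"
  by (auto simp: inj_on_def index_pairs_def root_minus_eq_iff)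

lemma inj_on_root_plus: "inj_on (\<lambda>(i, j). root_plus i j) (index_pairs N)"
  by (auto simp: inj_on_def index_pairs_def root_plus_eq_iff)

lemma inj_eps: "inj eps"
proof (rule injI)
  fix x y assume "eps x = eps y"
  then have "eps x x = eps y x" by simp
  then show "x = y" by (auto simp: eps_def split: if_splits)
qed

lemma inj_root_double: "inj root_double"
proof (rule injI)
  fix x y assume "root_double x = root_double y"
  then have "root_double x x = root_double y x" by simp
  then show "x = y" by (auto simp: root_double_def eps_def split: if_splits)
qed

lemma root_minus_ne_root_plus:
  assumes "i < j" shows "root_minus i j \<noteq> root_plus i' j'"
proof
  assume "root_minus i j = root_plus i' j'"
  then have "root_minus i j j = root_plus i' j' j" by simp
  with assms show False by (auto simp: root_minus_def root_plus_def eps_def split: if_splits)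
qed

lemma eps_ne_root_minus:
  assumes "i < j" shows "eps i' \<noteq> root_minus i j"
proof
  assume "eps i' = root_minus i j"
  then have "root_minus i j j = eps i' j" by simp
  with assms show False by (auto simp: root_minus_def eps_def split: if_splits)
qed

lemma eps_ne_root_plus:
  assumes "i < j" shows "eps i' \<noteq> root_plus i j"
proof
  assume "eps i' = root_plus i j"
  then have "root_plus i j i = eps i' i" "root_plus i j j = eps i' j" by simp_all
  with assms show False by (auto simp: root_plus_def eps_def split: if_splits)
qed

lemma root_double_ne_root_minus:
  assumes "i < j" shows "root_double i' \<noteq> root_minus i j"
proof
  assume "root_double i' = root_minus i j"
  then have "root_minus i j i' = root_double i' i'" by simp
  with assms show False by (auto simp: root_minus_def root_double_def eps_def split: if_splits)
qed

lemma root_double_ne_root_plus: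
  assumes "i < j" shows "root_double i' \<noteq> root_plus i j"
proof
  assume "root_double i' = root_plus i j"
  then have "root_plus i j i' = root_double i' i'" by simp
  with assms show False by (auto simp: root_plus_def root_double_def eps_def split: if_splits)
qed

lemma sum_index_pairs_eps_fst:
  assumes "k \<in> {1..N}"
  shows "(\<Sum>(i, j)\<in>index_pairs N. eps i k) = real (N - k)"
proof -
  have "(\<Sum>(i, j)\<in>index_pairs N. eps i k) = (\<Sum>i\<in>{1..N}. \<Sum>j\<in>{i+1..N}. eps i k)"
    unfolding index_pairs_eq_Sigma by (rule sum.Sigma[symmetric]) auto
  also have "\<dots> = (\<Sum>i\<in>{1..N}. if i = k then real (card {i+1..N}) else 0)"
    by (rule sum.cong) (auto simp: eps_def)
  also have "\<dots> = real (N - k)"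
    using assms by (simp add: sum.delta')
  finally show ?thesis .
qed

lemma sum_index_pairs_eps_snd:
  assumes "k \<in> {1..N}"
  shows "(\<Sum>(i, j)\<in>index_pairs N. eps j k) = real (k - 1)"
proof -
  have "(\<Sum>(i, j)\<in>index_pairs N. eps j k) = (\<Sum>i\<in>{1..N}. \<Sum>j\<in>{i+1..N}. eps j k)"
    unfolding index_pairs_eq_Sigma by (rule sum.Sigma[symmetric]) auto
  also have "\<dots> = (\<Sum>i\<in>{1..N}. if i < k then 1 else 0)"
    using assms by (intro sum.cong) (auto simp: eps_def sum.delta')
  also have "\<dots> = real (card {i\<in>{1..N}. i < k})"
    by (simp add: sum.inter_filter[symmetric])
  also have "{i\<in>{1..N}. i < k} = {1..<k}"
    using assms by auto
  finally show ?thesis by simp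
qed

lemma sum_eps: "k \<in> {1..N} \<Longrightarrow> (\<Sum>i\<in>{1..N}. eps i k) = 1"
  by (simp add: eps_def sum.delta')

lemma sum_root_minus:
  "(\<Sum>x\<in>index_pairs N. (case x of (i, j) \<Rightarrow> root_minus i j) k)
     = (\<Sum>(i, j)\<in>index_pairs N. eps i k) - (\<Sum>(i, j)\<in>index_pairs N. eps j k)"
  by (simp add: root_minus_def split_def sum_subtractf)

lemma sum_root_plus:
  "(\<Sum>x\<in>index_pairs N. (case x of (i, j) \<Rightarrow> root_plus i j) k)
     = (\<Sum>(i, j)\<in>index_pairs N. eps i k) + (\<Sum>(i, j)\<in>index_pairs N. eps j k)"
  by (simp add: root_plus_def split_def sum.distrib)

lemma sum_root_double: "(\<Sum>x\<in>{1..N}. root_double x k) = 2 * (\<Sum>i\<in>{1..N}. eps i k)"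
  by (simp add: root_double_def sum_distrib_left)

lemma disjoint_root_minus_root_plus:
  "(\<lambda>(i, j). root_minus i j) ` index_pairs r \<inter> (\<lambda>(i, j). root_plus i j) ` index_pairs r = {}"
  by (auto simp: index_pairs_def dest: root_minus_ne_root_plus)

lemmas rho_simps = sum.union_disjoint finite_index_pairs disjoint_root_minus_root_plus
  sum.reindex[OF inj_on_root_minus] sum.reindex[OF inj_on_root_plus]
  sum_root_minus sum_root_plus sum_index_pairs_eps_fst sum_index_pairs_eps_snd of_nat_diff

lemma rho_TA: "k \<in> {1..r+1} \<Longrightarrow> rho TA r k = (real r + 2 - 2 * real k) / 2"
  unfolding rho_def pos_roots_TA by (simp add: rho_simps)

lemma rho_TB: "k \<in> {1..r} \<Longrightarrow> rho TB r k = real r - real k + 1/2"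
proof -
  have "((\<lambda>(i, j). root_minus i j) ` index_pairs r \<union> (\<lambda>(i, j). root_plus i j) ` index_pairs r)
      \<inter> eps ` {1..r} = {}"
    by (auto simp: index_pairs_def dest: eps_ne_root_minus eps_ne_root_plus)
  moreover assume "k \<in> {1..r}"
  ultimately show ?thesis
    using sum_eps[of k r] unfolding rho_def pos_roots_TB
    by (simp add: rho_simps sum.reindex[OF inj_eps[THEN inj_on_subset]] sum_eps)
qed

lemma rho_TC: "k \<in> {1..r} \<Longrightarrow> rho TC r k = real r - real k + 1"
proof -
  have "((\<lambda>(i, j). root_minus i j) ` index_pairs r \<union> (\<lambda>(i, j). root_plus i j) ` index_pairs r)
      \<inter> root_double ` {1..r} = {}"
    by (auto simp: index_pairs_def dest: root_double_ne_root_minus root_double_ne_root_plus)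
  moreover assume "k \<in> {1..r}"
  ultimately show ?thesis
    using sum_eps[of k r] sum_root_double[of k r] unfolding rho_def pos_roots_TC
    by (simp add: rho_simps sum.reindex[OF inj_root_double[THEN inj_on_subset]]
        sum_root_double sum_eps)
qed

lemma rho_TD: "k \<in> {1..r} \<Longrightarrow> rho TD r k = real r - real k"
  unfolding rho_def pos_roots_TD by (simp add: rho_simps)

lemma ip_eps: "i \<in> {1..amb t r} \<Longrightarrow> ip t r x (eps i) = x i"
  by (simp add: ip_def eps_def if_distrib sum.delta' cong: if_cong)

lemma ip_root_minus:
  assumes "i \<in> {1..amb t r}" "j \<in> {1..amb t r}"
  shows "ip t r x (root_minus i j) = x i - x j"
proof -
  have "ip t r x (root_minus i j) = ip t r x (eps i) - ip t r x (eps j)"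
    by (simp add: ip_def root_minus_def right_diff_distrib sum_subtractf)
  then show ?thesis using assms by (simp add: ip_eps)
qed

lemma ip_root_plus:
  assumes "i \<in> {1..amb t r}" "j \<in> {1..amb t r}"
  shows "ip t r x (root_plus i j) = x i + x j"
proof -
  have "ip t r x (root_plus i j) = ip t r x (eps i) + ip t r x (eps j)"
    by (simp add: ip_def root_plus_def distrib_left sum.distrib)
  then show ?thesis using assms by (simp add: ip_eps)
qed

lemma ip_root_double: "i \<in> {1..amb t r} \<Longrightarrow> ip t r x (root_double i) = 2 * x i"
  by (simp add: ip_def root_double_def eps_def if_distrib sum.delta' cong: if_cong)

lemma ip_add_left: "ip t r (\<lambda>k. x k + y k) z = ip t r x z + ip t r y z"
  by (simp add: ip_def distrib_right sum.distrib)

lemma ip_weight: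
  "ip t r (weight t r a) z = (\<Sum>l\<in>{1..r}. real (a l) * ip t r (fund_weight t r l) z)"
proof -
  have "ip t r (weight t r a) z
      = (\<Sum>k\<in>{1..amb t r}. \<Sum>l\<in>{1..r}. real (a l) * (fund_weight t r l k * z k))"
    unfolding ip_def weight_def by (simp add: sum_distrib_right mult.assoc)
  also have "\<dots> = (\<Sum>l\<in>{1..r}. \<Sum>k\<in>{1..amb t r}. real (a l) * (fund_weight t r l k * z k))"
    by (rule sum.swap)
  finally show ?thesis by (simp add: ip_def sum_distrib_left)
qed

lemma pos_rootsE:
  assumes "\<alpha> \<in> pos_roots t r"
  obtains (minus) i j where "\<alpha> = root_minus i j" "1 \<le> i" "i < j" "j \<le> amb t r"
  | (plus) i j where "t \<noteq> TA" "\<alpha> = root_plus i j" "1 \<le> i" "i < j" "j \<le> r"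
  | (short) i where "t = TB" "\<alpha> = eps i" "1 \<le> i" "i \<le> r"
  | (long) i where "t = TC" "\<alpha> = root_double i" "1 \<le> i" "i \<le> r"
  using assms
  by (cases t) (auto simp: pos_roots_eqs index_pairs_def simp del: pos_roots.simps)

lemma root_minus_in_pos_roots:
  assumes "1 \<le> i" "i < j" "j \<le> amb t r"
  shows "root_minus i j \<in> pos_roots t r"
proof -
  have "root_minus i j \<in> (\<lambda>(i, j). root_minus i j) ` index_pairs (amb t r)"
    using assms by (force simp: index_pairs_def)
  then show ?thesis by (cases t) (simp_all add: pos_roots_eqs del: pos_roots.simps)
qed

lemma root_plus_in_pos_roots:
  assumes "t \<noteq> TA" "1 \<le> i" "i < j" "j \<le> r"
  shows "root_plus i j \<in> pos_roots t r"
proof -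
  have "root_plus i j \<in> (\<lambda>(i, j). root_plus i j) ` index_pairs r"
    using assms by (force simp: index_pairs_def)
  then show ?thesis using assms by (cases t) (simp_all add: pos_roots_eqs del: pos_roots.simps)
qed

lemma ip_rho_root_minus:
  assumes "valid_type t r" "i \<in> {1..amb t r}" "j \<in> {1..amb t r}"
  shows "ip t r (rho t r) (root_minus i j) = real j - real i"
  using assms by (cases t) (auto simp: ip_root_minus rho_TA rho_TB rho_TC rho_TD field_simps)

lemma ip_rho_root_plus:
  assumes "t \<noteq> TA" "i \<in> {1..r}" "j \<in> {1..r}" "i < j"
  shows "0 < ip t r (rho t r) (root_plus i j)"
    and "ip t r (rho t r) (root_plus i j) \<le> 2 * real r + 2 - real i - real j"
  using assms by (cases t; auto simp: ip_root_plus rho_TB rho_TC rho_TD)+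

lemma ip_rho_pos:
  assumes "valid_type t r" "\<alpha> \<in> pos_roots t r"
  shows "0 < ip t r (rho t r) \<alpha>"
  using assms(2)
proof (cases rule: pos_rootsE)
  case (minus i j)
  then show ?thesis using assms(1) by (simp add: ip_rho_root_minus)
next
  case (plus i j)
  then show ?thesis using ip_rho_root_plus(1)[of t i r j] by simp
next
  case (short i)
  then show ?thesis by (simp add: ip_eps rho_TB)
next
  case (long i)
  then show ?thesis by (simp add: ip_root_double rho_TC)
qed

lemma ip_fund_weight_nonneg:
  assumes "\<alpha> \<in> pos_roots t r"
  shows "0 \<le> ip t r (fund_weight t r l) \<alpha>"
  using assms
proof (cases rule: pos_rootsE)
  case (minus i j)
  then show ?thesis by (cases t) (auto simp: ip_root_minus)
next
  case (plus i j)
  then show ?thesis by (cases t) (auto simp: ip_root_plus)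
qed (simp_all add: ip_eps ip_root_double)

lemma ip_fund_weight_root_minus_ge:
  "1 \<le> i \<Longrightarrow> i \<le> l \<Longrightarrow> l < j \<Longrightarrow> j \<le> amb t r \<Longrightarrow> l \<le> r \<Longrightarrow>
    1 \<le> ip t r (fund_weight t r l) (root_minus i j)"
  by (cases t) (auto simp: ip_root_minus)

lemma ip_fund_weight_root_plus_ge:
  "t \<noteq> TA \<Longrightarrow> 1 \<le> i \<Longrightarrow> i < j \<Longrightarrow> j + 1 \<le> r \<Longrightarrow> j \<le> l \<Longrightarrow> l \<le> r \<Longrightarrow>
    1 \<le> ip t r (fund_weight t r l) (root_plus i j)"
  by (cases t) (auto simp: ip_root_plus)

lemma ip_weight_nonneg: "\<alpha> \<in> pos_roots t r \<Longrightarrow> 0 \<le> ip t r (weight t r a) \<alpha>"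
  unfolding ip_weight by (rule sum_nonneg) (simp add: ip_fund_weight_nonneg)

lemma label_le_ip_weight:
  assumes "\<alpha> \<in> pos_roots t r" "l \<in> {1..r}" "1 \<le> ip t r (fund_weight t r l) \<alpha>"
  shows "real (a l) \<le> ip t r (weight t r a) \<alpha>"
proof -
  have "real (a l) * 1 \<le> real (a l) * ip t r (fund_weight t r l) \<alpha>"
    using assms(3) by (intro mult_left_mono) auto
  also have "\<dots> \<le> ip t r (weight t r a) \<alpha>"
    unfolding ip_weight using assms(1,2)
    by (intro member_le_sum) (auto simp: ip_fund_weight_nonneg)
  finally show ?thesis by simp
qed

subsection \<open>The factors of the Weyl dimension formula\<close>

definition weyl_factor :: "ctype \<Rightarrow> nat \<Rightarrow> (nat \<Rightarrow> nat) \<Rightarrow> (nat \<Rightarrow> real) \<Rightarrow> real" where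
  "weyl_factor t r a \<alpha> = ip t r (\<lambda>k. weight t r a k + rho t r k) \<alpha> / ip t r (rho t r) \<alpha>"

lemma weyl_factor_eq:
  assumes "valid_type t r" "\<alpha> \<in> pos_roots t r"
  shows "weyl_factor t r a \<alpha> = 1 + ip t r (weight t r a) \<alpha> / ip t r (rho t r) \<alpha>"
  using ip_rho_pos[OF assms] unfolding weyl_factor_def ip_add_left by (simp add: field_simps)

lemma one_le_weyl_factor: "valid_type t r \<Longrightarrow> \<alpha> \<in> pos_roots t r \<Longrightarrow> 1 \<le> weyl_factor t r a \<alpha>"
  using ip_rho_pos[of t r \<alpha>] ip_weight_nonneg[of \<alpha> t r a] by (simp add: weyl_factor_eq)

lemma prod_weyl_factor_le_char_degree:
  assumes "valid_type t r" "S \<subseteq> pos_roots t r"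
  shows "prod (weyl_factor t r a) S \<le> char_degree t r a"
  unfolding char_degree_def weyl_factor_def[symmetric] using assms
  by (intro prod_mono2) (auto simp: finite_pos_roots intro: one_le_weyl_factor
      order_trans[OF zero_le_one one_le_weyl_factor])

lemma weyl_factor_root_minus_ge:
  assumes "valid_type t r" "1 \<le> i" "i \<le> l" "l < j" "j \<le> amb t r" "l \<le> r"
  shows "1 + real (a l) / (real j - real i) \<le> weyl_factor t r a (root_minus i j)"
proof -
  have root: "root_minus i j \<in> pos_roots t r"
    using assms by (intro root_minus_in_pos_roots) auto
  have "real (a l) \<le> ip t r (weight t r a) (root_minus i j)"
    using assms by (intro label_le_ip_weight[OF root] ip_fund_weight_root_minus_ge) auto
  then have "real (a l) / (real j - real i) \<le> ip t r (weight t r a) (root_minus i j) / (real j - real i)"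
    using assms by (intro divide_right_mono) auto
  then show ?thesis
    using assms by (simp add: weyl_factor_eq[OF assms(1) root] ip_rho_root_minus)
qed

lemma weyl_factor_root_plus_ge:
  assumes "valid_type t r" "t \<noteq> TA" "1 \<le> i" "i < j" "j + 1 \<le> r" "j \<le> l" "l \<le> r"
  shows "1 + real (a l) / (2 * real r + 2 - real i - real j) \<le> weyl_factor t r a (root_plus i j)"
proof -
  have root: "root_plus i j \<in> pos_roots t r"
    using assms by (intro root_plus_in_pos_roots) auto
  have rho: "0 < ip t r (rho t r) (root_plus i j)"
    "ip t r (rho t r) (root_plus i j) \<le> 2 * real r + 2 - real i - real j"
    using ip_rho_root_plus[of t i r j] assms by auto
  have "real (a l) \<le> ip t r (weight t r a) (root_plus i j)"
    using assms by (intro label_le_ip_weight[OF root] ip_fund_weight_root_plus_ge) auto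
  then have "real (a l) / (2 * real r + 2 - real i - real j)
      \<le> ip t r (weight t r a) (root_plus i j) / (2 * real r + 2 - real i - real j)"
    using assms rho by (intro divide_right_mono) auto
  also have "\<dots> \<le> ip t r (weight t r a) (root_plus i j) / ip t r (rho t r) (root_plus i j)"
    using rho ip_weight_nonneg[OF root] by (intro divide_left_mono) auto
  finally show ?thesis by (simp add: weyl_factor_eq[OF assms(1) root])
qed

lemma one_plus_power_le_chord:
  fixes x :: real
  assumes "0 \<le> x" "x \<le> 1"
  shows "(1 + x) ^ e \<le> 1 + (2 ^ e - 1) * x"
proof (induction e)
  case (Suc e)
  have "(1 + x) ^ Suc e \<le> (1 + x) * (1 + (2 ^ e - 1) * x)"
    using Suc assms by (simp add: mult_left_mono)
  also have "\<dots> = 1 + 2 ^ e * x + (2 ^ e - 1) * (x * x)"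
    by (simp add: algebra_simps)
  also have "\<dots> \<le> 1 + 2 ^ e * x + (2 ^ e - 1) * x"
    using assms mult_left_mono[of x 1 x] by (intro add_left_mono mult_left_mono) auto
  also have "\<dots> = 1 + (2 ^ Suc e - 1) * x"
    by (simp add: algebra_simps)
  finally show ?case .
qed simp

lemma char_degree_ge_prod_block:
  assumes "valid_type t r" and inj: "inj_on (\<lambda>(i, j). g i j) X"
    and roots: "(\<lambda>(i, j). g i j) ` X \<subseteq> pos_roots t r"
    and label: "2 ^ e - 1 \<le> real (a l)"
    and factor: "\<And>i j. (i, j) \<in> X \<Longrightarrow> 1 \<le> d i j \<and> 1 + real (a l) / d i j \<le> weyl_factor t r a (g i j)"
  shows "(\<Prod>(i, j)\<in>X. 1 + 1 / d i j) ^ e \<le> char_degree t r a"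
proof -
  have "0 \<le> (1 + 1 / d i j) ^ e \<and> (1 + 1 / d i j) ^ e \<le> weyl_factor t r a (g i j)"
    if "(i, j) \<in> X" for i j
  proof -
    have d: "1 \<le> d i j" "1 + real (a l) / d i j \<le> weyl_factor t r a (g i j)"
      using factor[OF that] by auto
    have "(1 + 1 / d i j) ^ e \<le> 1 + (2 ^ e - 1) * (1 / d i j)"
      using d by (intro one_plus_power_le_chord) auto
    also have "\<dots> \<le> 1 + real (a l) * (1 / d i j)"
      using d label by (intro add_left_mono mult_right_mono) auto
    finally show ?thesis using d by simp
  qed
  then have "(\<Prod>(i, j)\<in>X. 1 + 1 / d i j) ^ e \<le> (\<Prod>(i, j)\<in>X. weyl_factor t r a (g i j))"
    unfolding prod_power_distrib by (intro prod_mono) (auto simp: split_def)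
  also have "\<dots> = prod (weyl_factor t r a) ((\<lambda>(i, j). g i j) ` X)"
    using inj by (simp add: prod.reindex split_def)
  also have "\<dots> \<le> char_degree t r a"
    using assms(1) roots by (rule prod_weyl_factor_le_char_degree)
  finally show ?thesis .
qed

subsection \<open>Telescoping products\<close>

lemma power_card_le_prod:
  fixes f :: "'a \<Rightarrow> real"
  assumes "0 \<le> b" "\<And>x. x \<in> A \<Longrightarrow> b \<le> f x"
  shows "b ^ card A \<le> prod f A"
  using prod_mono[of A "\<lambda>_. b" f] assms by simp

lemma prod_one_plus_inverse_ascending:
  assumes "i \<le> p" "p \<le> q"
  shows "(\<Prod>j\<in>{p+1..q}. 1 + 1 / (real j - real i)) = (real q - real i + 1) / (real p - real i + 1)"
  using assms(2)
proof (induction q rule: dec_induct)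
  case (step q)
  have "{p+1..Suc q} = insert (Suc q) {p+1..q}"
    using step.hyps by auto
  then have "(\<Prod>j\<in>{p+1..Suc q}. 1 + 1 / (real j - real i))
      = (1 + 1 / (real q - real i + 1)) * ((real q - real i + 1) / (real p - real i + 1))"
    using step.IH by (simp add: algebra_simps)
  also have "\<dots> = (real (Suc q) - real i + 1) / (real p - real i + 1)"
  proof -
    have "(1 + 1 / B) * (B / P) = (B + 1) / P" if "0 < B" "0 < P" for B P :: real
      using that by (simp add: field_simps)
    moreover have "real q - real i + 1 > 0" "real p - real i + 1 > 0"
      using step.hyps assms(1) by linarith+
    ultimately show ?thesis by simp
  qed
  finally show ?case .
qed (use assms in simp)

lemma prod_one_plus_inverse_descending:
  fixes M :: real
  assumes "real k < M"
  shows "(\<Prod>i\<in>{1..k}. 1 + 1 / (M - real i)) = M / (M - real k)"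
  using assms
proof (induction k)
  case (Suc k)
  have "{1..Suc k} = insert (Suc k) {1..k}" by auto
  with Suc show ?case by (simp add: field_simps)
qed simp

lemma block_minus_lower_prod_ge:
  assumes "1 \<le> s" "s \<le> l" "l < c"
  shows "((real c - real l + 1) / real s) ^ s
    \<le> (\<Prod>(i, j)\<in>{l+1-s..l} \<times> {l+1..c}. 1 + 1 / (real j - real i))"
proof -
  have "((real c - real l + 1) / real s) ^ card {l+1-s..l}
      \<le> (\<Prod>i\<in>{l+1-s..l}. (real c - real i + 1) / (real l - real i + 1))"
  proof (rule power_card_le_prod)
    show "0 \<le> (real c - real l + 1) / real s"
      using assms by simp
  next
    fix i assume i: "i \<in> {l+1-s..l}"
    have "(real c - real l + 1) / real s \<le> (real c - real l + 1) / (real l - real i + 1)"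
      using i assms by (intro divide_left_mono) auto
    also have "\<dots> \<le> (real c - real i + 1) / (real l - real i + 1)"
      using i by (intro divide_right_mono) auto
    finally show "(real c - real l + 1) / real s \<le> (real c - real i + 1) / (real l - real i + 1)" .
  qed
  also have "\<dots> = (\<Prod>i\<in>{l+1-s..l}. \<Prod>j\<in>{l+1..c}. 1 + 1 / (real j - real i))"
    using assms by (intro prod.cong refl prod_one_plus_inverse_ascending[symmetric]) auto
  finally show ?thesis
    using assms by (simp add: prod.cartesian_product)
qed

lemma block_minus_upper_prod_ge:
  assumes "1 \<le> s"
  shows "((real l + 1) / real s) ^ s
    \<le> (\<Prod>(j, i)\<in>{l+1..l+s} \<times> {1..l}. 1 + 1 / (real j - real i))"
proof -
  have "((real l + 1) / real s) ^ card {l+1..l+s} \<le> (\<Prod>j\<in>{l+1..l+s}. real j / (real j - real l))"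
  proof (rule power_card_le_prod)
    show "0 \<le> (real l + 1) / real s"
      by simp
  next
    fix j assume j: "j \<in> {l+1..l+s}"
    have "(real l + 1) / real s \<le> (real l + 1) / (real j - real l)"
      using j assms by (intro divide_left_mono) auto
    also have "\<dots> \<le> real j / (real j - real l)"
      using j by (intro divide_right_mono) auto
    finally show "(real l + 1) / real s \<le> real j / (real j - real l)" .
  qed
  also have "\<dots> = (\<Prod>j\<in>{l+1..l+s}. \<Prod>i\<in>{1..l}. 1 + 1 / (real j - real i))"
    by (intro prod.cong refl prod_one_plus_inverse_descending[symmetric]) auto
  finally show ?thesis
    by (simp add: prod.cartesian_product)
qed

lemma block_plus_prod_ge:
  assumes "1 \<le> s" "2 * s + 2 \<le> r"
  shows "(real r / real (4 * s + 1)) ^ s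
    \<le> (\<Prod>(j, i)\<in>Sigma {r+1-2*s..r-s} (\<lambda>j. {1..j-1}). 1 + 1 / (2 * real r + 2 - real i - real j))"
proof -
  have "(real r / real (4 * s + 1)) ^ card {r+1-2*s..r-s}
      \<le> (\<Prod>j\<in>{r+1-2*s..r-s}. (2 * real r + 2 - real j) / (2 * real r + 3 - 2 * real j))"
  proof (rule power_card_le_prod)
    show "0 \<le> real r / real (4 * s + 1)"
      by simp
  next
    fix j assume j: "j \<in> {r+1-2*s..r-s}"
    have d: "0 < 2 * real r + 3 - 2 * real j" "2 * real r + 3 - 2 * real j \<le> real (4 * s + 1)"
      using j assms by auto
    have "real r / real (4 * s + 1) \<le> real r / (2 * real r + 3 - 2 * real j)"
      using d by (intro divide_left_mono) auto
    also have "\<dots> \<le> (2 * real r + 2 - real j) / (2 * real r + 3 - 2 * real j)"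
      using j d by (intro divide_right_mono) auto
    finally show "real r / real (4 * s + 1) \<le> (2 * real r + 2 - real j) / (2 * real r + 3 - 2 * real j)" .
  qed
  also have "\<dots> = (\<Prod>j\<in>{r+1-2*s..r-s}. \<Prod>i\<in>{1..j-1}. 1 + 1 / (2 * real r + 2 - real i - real j))"
  proof (rule prod.cong[OF refl])
    fix j assume j: "j \<in> {r+1-2*s..r-s}"
    have "(\<Prod>i\<in>{1..j-1}. 1 + 1 / ((2 * real r + 2 - real j) - real i))
        = (2 * real r + 2 - real j) / (2 * real r + 2 - real j - real (j - 1))"
      using j assms by (intro prod_one_plus_inverse_descending) auto
    moreover have "1 \<le> j"
      using j assms by auto
    then have "real (j - 1) = real j - 1"
      by (simp add: of_nat_diff)
    ultimately show "(2 * real r + 2 - real j) / (2 * real r + 3 - 2 * real j)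
        = (\<Prod>i\<in>{1..j-1}. 1 + 1 / (2 * real r + 2 - real i - real j))"
      by (simp add: algebra_simps)
  qed
  finally show ?thesis
    using assms by (simp add: prod.Sigma)
qed

subsection \<open>A large label forces a large degree\<close>

text \<open>The three blocks of s rows of roots: \<epsilon>_i - \<epsilon>_j with l - s < i \<le> l < j;
\<epsilon>_i - \<epsilon>_j with i \<le> l < j \<le> l + s; and, for B, C, D, \<epsilon>_i + \<epsilon>_j with i < j and
r - 2s < j \<le> r - s.  The first serves l up to about r/2, the second larger l, the third
l within s of r.\<close>

lemma char_degree_ge_block_minus_lower:
  assumes v: "valid_type t r" and "1 \<le> s" "s \<le> l" "l < amb t r" "l \<le> r"
    and label: "2 ^ e - 1 \<le> real (a l)"
  shows "(((real (amb t r) - real l + 1) / real s) ^ s) ^ e \<le> char_degree t r a"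
proof -
  let ?X = "{l+1-s..l} \<times> {l+1..amb t r}"
  have inj: "inj_on (\<lambda>(i, j). root_minus i j) ?X"
    by (auto simp: inj_on_def root_minus_eq_iff)
  have roots: "(\<lambda>(i, j). root_minus i j) ` ?X \<subseteq> pos_roots t r"
    using assms by (auto intro!: root_minus_in_pos_roots)
  have factor: "1 \<le> real j - real i \<and> 1 + real (a l) / (real j - real i) \<le> weyl_factor t r a (root_minus i j)"
    if "(i, j) \<in> ?X" for i j
    using that assms by (auto intro!: weyl_factor_root_minus_ge)
  have base: "0 \<le> (real (amb t r) - real l + 1) / real s"
    using assms by simp
  have "((real (amb t r) - real l + 1) / real s) ^ s \<le> (\<Prod>(i, j)\<in>?X. 1 + 1 / (real j - real i))"
    using assms by (intro block_minus_lower_prod_ge) auto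
  from power_mono[OF this zero_le_power[OF base]]
  show ?thesis
    using char_degree_ge_prod_block[where a = a and l = l, OF v inj roots label factor]
    by (rule order_trans)
qed

lemma char_degree_ge_block_minus_upper:
  assumes v: "valid_type t r" and "1 \<le> s" "1 \<le> l" "l + s \<le> amb t r" "l \<le> r"
    and label: "2 ^ e - 1 \<le> real (a l)"
  shows "(((real l + 1) / real s) ^ s) ^ e \<le> char_degree t r a"
proof -
  let ?X = "{l+1..l+s} \<times> {1..l}"
  have inj: "inj_on (\<lambda>(j, i). root_minus i j) ?X"
    by (auto simp: inj_on_def root_minus_eq_iff)
  have roots: "(\<lambda>(j, i). root_minus i j) ` ?X \<subseteq> pos_roots t r"
    using assms by (auto intro!: root_minus_in_pos_roots)
  have factor: "1 \<le> real j - real i \<and> 1 + real (a l) / (real j - real i) \<le> weyl_factor t r a (root_minus i j)"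
    if "(j, i) \<in> ?X" for j i
    using that assms by (auto intro!: weyl_factor_root_minus_ge)
  have "((real l + 1) / real s) ^ s \<le> (\<Prod>(j, i)\<in>?X. 1 + 1 / (real j - real i))"
    using assms by (intro block_minus_upper_prod_ge)
  from power_mono[OF this zero_le_power] show ?thesis
    using char_degree_ge_prod_block[where a = a and l = l, OF v inj roots label factor]
    by (rule order_trans) simp
qed

lemma char_degree_ge_block_plus:
  assumes v: "valid_type t r" and "t \<noteq> TA" "1 \<le> s" "2 * s + 2 \<le> r" "r - s \<le> l" "l \<le> r"
    and label: "2 ^ e - 1 \<le> real (a l)"
  shows "((real r / real (4 * s + 1)) ^ s) ^ e \<le> char_degree t r a"
proof -
  let ?X = "Sigma {r+1-2*s..r-s} (\<lambda>j. {1..j-1})"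
  have inj: "inj_on (\<lambda>(j, i). root_plus i j) ?X"
    by (auto simp: inj_on_def root_plus_eq_iff)
  have roots: "(\<lambda>(j, i). root_plus i j) ` ?X \<subseteq> pos_roots t r"
    using assms by (auto intro!: root_plus_in_pos_roots)
  have factor: "1 \<le> 2 * real r + 2 - real i - real j
      \<and> 1 + real (a l) / (2 * real r + 2 - real i - real j) \<le> weyl_factor t r a (root_plus i j)"
    if "(j, i) \<in> ?X" for j i
    using that assms by (auto intro!: weyl_factor_root_plus_ge)
  have "(real r / real (4 * s + 1)) ^ s \<le> (\<Prod>(j, i)\<in>?X. 1 + 1 / (2 * real r + 2 - real i - real j))"
    using assms by (intro block_plus_prod_ge)
  from power_mono[OF this zero_le_power] show ?thesis
    using char_degree_ge_prod_block[where a = a and l = l, OF v inj roots label factor]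
    by (rule order_trans) simp
qed

lemma char_degree_ge_large_label:
  assumes v: "valid_type t r" and s: "1 \<le> s" "2 * s + 2 \<le> r" and l: "s \<le> l" "l \<le> r"
    and TA: "t = TA \<Longrightarrow> l + s \<le> r + 1" and label: "2 ^ e - 1 \<le> real (a l)"
  shows "((real r / real (4 * s + 1)) ^ s) ^ e \<le> char_degree t r a"
proof -
  have "real r / real (4 * s + 1) \<le> X / real s" if "real r \<le> 2 * X" for X
  proof -
    have "real r / real (4 * s + 1) \<le> real r / (2 * real s)"
      using s by (intro divide_left_mono) auto
    also have "\<dots> \<le> X / real s"
      using s that by (simp add: field_simps)
    finally show ?thesis .
  qed
  then have mono: "((real r / real (4 * s + 1)) ^ s) ^ e \<le> ((X / real s) ^ s) ^ e"
    if "real r \<le> 2 * X" for X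
    using that by (intro power_mono zero_le_power) auto
  consider "l + s \<le> amb t r" "2 * l \<le> amb t r" | "l + s \<le> amb t r" "\<not> 2 * l \<le> amb t r"
    | "\<not> l + s \<le> amb t r"
    by blast
  then show ?thesis
  proof cases
    case 1
    then have "real r \<le> 2 * (real (amb t r) - real l + 1)"
      by (cases t) auto
    with 1 show ?thesis
      using s l label by (intro order_trans[OF mono char_degree_ge_block_minus_lower[OF v]]) auto
  next
    case 2
    then have "real r \<le> 2 * (real l + 1)"
      by (cases t) auto
    with 2 show ?thesis
      using s l label by (intro order_trans[OF mono char_degree_ge_block_minus_upper[OF v]]) auto
  next
    case 3
    then have "t \<noteq> TA" "r - s \<le> l"
      using TA by (cases t; auto)+
    then show ?thesis
      using s l label by (intro char_degree_ge_block_plus[OF v]) auto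
  qed
qed

lemma base_lt_of_power_Suc_lt:
  fixes b :: nat
  assumes "0 < b" "b ^ (n + 1) < r"
  shows "b < r"
proof -
  have "b \<le> b ^ (n + 1)"
    using assms(1) by (intro self_le_power) auto
  with assms(2) show ?thesis by linarith
qed

lemma power_lt_divide_power_Suc:
  fixes K r :: nat
  assumes "0 < K" "K ^ (n + 1) < r"
  shows "real r ^ n < (real r / real K) ^ (n + 1)"
proof -
  have "real K ^ (n + 1) < real r"
    using assms(2) by (simp only: of_nat_power [symmetric] of_nat_less_iff)
  moreover have "0 < real K ^ (n + 1)"
    using assms(1) by simp
  ultimately have "0 < real r" "1 < real r / real K ^ (n + 1)"
    by (simp_all add: less_divide_eq)
  then have "real r ^ n * 1 < real r ^ n * (real r / real K ^ (n + 1))"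
    by (intro mult_strict_left_mono) auto
  also have "\<dots> = (real r / real K) ^ (n + 1)"
    by (simp add: power_divide ac_simps)
  finally show ?thesis by simp
qed

lemma label_lt_of_char_degree_le:
  assumes v: "valid_type t r" and r: "(4 * n + 5) ^ (n + 1) < r"
    and deg: "char_degree t r a \<le> real r ^ n" and l: "l \<in> {1..r}"
  shows "a l < 2 ^ (n + 1) - 1"
proof (rule ccontr)
  have r6: "2 * 1 + 2 \<le> r"
    using base_lt_of_power_Suc_lt[OF _ r] by simp
  assume "\<not> a l < 2 ^ (n + 1) - 1"
  then have "real (2 ^ (n + 1) - 1) \<le> real (a l)"
    by (simp only: not_less of_nat_le_iff)
  moreover have "real (2 ^ (n + 1) - 1 :: nat) = 2 ^ (n + 1) - 1"
    by (simp add: of_nat_diff)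
  ultimately have "2 ^ (n + 1) - 1 \<le> real (a l)"
    by simp
  then have "((real r / real (4 * 1 + 1)) ^ 1) ^ (n + 1) \<le> char_degree t r a"
    using l r6 by (intro char_degree_ge_large_label[OF v]) auto
  moreover have "(5::nat) ^ (n + 1) \<le> (4 * n + 5) ^ (n + 1)"
    by (rule power_mono) auto
  with r have "real r ^ n < (real r / real 5) ^ (n + 1)"
    by (intro power_lt_divide_power_Suc) auto
  ultimately show False
    using deg by simp
qed

lemma label_eq_zero_of_char_degree_le:
  assumes v: "valid_type t r" and r: "(4 * n + 5) ^ (n + 1) < r"
    and deg: "char_degree t r a \<le> real r ^ n"
    and l: "n + 1 < l" "l \<le> r" and TA: "t = TA \<Longrightarrow> l + n + 1 \<le> r"
  shows "a l = 0"
proof (rule ccontr)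
  have r2: "2 * (n + 1) + 2 \<le> r"
    using base_lt_of_power_Suc_lt[OF _ r] by simp
  assume "a l \<noteq> 0"
  then have "2 ^ 1 - 1 \<le> real (a l)"
    by simp
  then have "((real r / real (4 * (n + 1) + 1)) ^ (n + 1)) ^ 1 \<le> char_degree t r a"
    using l r2 TA by (intro char_degree_ge_large_label[OF v]) auto
  moreover have "real r ^ n < (real r / real (4 * n + 5)) ^ (n + 1)"
    using r by (intro power_lt_divide_power_Suc) auto
  ultimately show False
    using deg by (simp add: algebra_simps)
qed

lemma sum_delta_reflected:
  fixes f :: "nat \<Rightarrow> nat"
  assumes "k \<in> {1..r}" "m \<le> r"
  shows "(\<Sum>i\<in>{1..m}. if r + 1 - i = k then f i else 0) = (if r + 1 - k \<le> m then f (r + 1 - k) else 0)"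
proof -
  have "(\<Sum>i\<in>{1..m}. if r + 1 - i = k then f i else 0) = (\<Sum>i\<in>{1..m}. if i = r + 1 - k then f i else 0)"
    using assms by (intro sum.cong) auto
  also have "\<dots> = (if r + 1 - k \<le> m then f (r + 1 - k) else 0)"
    using assms by (subst sum.delta) auto
  finally show ?thesis .
qed

lemma sum_first_labels:
  fixes a :: "nat \<Rightarrow> nat"
  shows "k \<in> {1..r} \<Longrightarrow> (\<Sum>i\<in>{1..m}. if i = k then map (\<lambda>i. a (i + 1)) [0..<m] ! (i - 1) else 0)
    = (if k \<le> m then a k else 0)"
  by (auto simp: sum.delta nth_upt cong: if_cong)

lemma sum_last_labels:
  fixes a :: "nat \<Rightarrow> nat"
  shows "k \<in> {1..r} \<Longrightarrow> m \<le> r \<Longrightarrow>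
   (\<Sum>i\<in>{1..m}. if r + 1 - i = k then map (\<lambda>i. a (r - i)) [0..<m] ! (i - 1) else 0)
    = (if r + 1 - k \<le> m then a k else 0)"
  by (subst sum_delta_reflected[where f = "\<lambda>i. map (\<lambda>i. a (r - i)) [0..<m] ! (i - 1)"]) auto

definition small_label_lists :: "nat \<Rightarrow> nat list set" where
  "small_label_lists n = {xs. set xs \<subseteq> {..<2 ^ (n + 1) - 1} \<and> length xs = n + 1}"

lemma finite_small_label_lists: "finite (small_label_lists n)"
  unfolding small_label_lists_def by (rule finite_lists_length_eq) simp

lemma labels_of_char_degree_le:
  assumes v: "valid_type t r" and r: "(4 * n + 5) ^ (n + 1) < r"
    and deg: "char_degree t r a \<le> real r ^ n"
  defines "m \<equiv> n + 1" and "\<Lambda> \<equiv> small_label_lists n"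
  shows "(t = TA \<and>
           (\<exists>xs\<in>\<Lambda>. \<exists>ys\<in>\<Lambda>. \<forall>k\<in>{1..r}.
              a k = (\<Sum>i\<in>{1..m}. if i = k then xs ! (i - 1) else 0)
                  + (\<Sum>i\<in>{1..m}. if r + 1 - i = k then ys ! (i - 1) else 0)))
        \<or> (t \<in> {TB, TC, TD} \<and>
           (\<exists>xs\<in>\<Lambda>. \<forall>k\<in>{1..r}. a k = (\<Sum>i\<in>{1..m}. if i = k then xs ! (i - 1) else 0)))"
proof -
  have r2: "2 * m + 2 \<le> r"
    using base_lt_of_power_Suc_lt[OF _ r] by (simp add: m_def)
  have small: "a l < 2 ^ (n + 1) - 1" if "l \<in> {1..r}" for l
    using label_lt_of_char_degree_le[OF v r deg that] .
  have zero: "a l = 0" if "m < l" "l \<le> r" "t = TA \<Longrightarrow> l + m \<le> r" for l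
    using that by (intro label_eq_zero_of_char_degree_le[OF v r deg]) (auto simp: m_def)
  define xs where "xs = map (\<lambda>i. a (i + 1)) [0..<m]"
  define ys where "ys = map (\<lambda>i. a (r - i)) [0..<m]"
  have "xs \<in> \<Lambda>" "ys \<in> \<Lambda>"
    using small r2 by (auto simp: \<Lambda>_def small_label_lists_def xs_def ys_def m_def)
  show ?thesis
  proof (cases "t = TA")
    case TA: True
    have "a k = (\<Sum>i\<in>{1..m}. if i = k then xs ! (i - 1) else 0)
        + (\<Sum>i\<in>{1..m}. if r + 1 - i = k then ys ! (i - 1) else 0)" if "k \<in> {1..r}" for k
    proof -
      have "m \<le> r" using r2 by simp
      then show ?thesis
        unfolding xs_def ys_def sum_first_labels[OF that] sum_last_labels[OF that \<open>m \<le> r\<close>]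
        using that r2 zero[of k] TA by auto
    qed
    with TA \<open>xs \<in> \<Lambda>\<close> \<open>ys \<in> \<Lambda>\<close> show ?thesis by blast
  next
    case False
    have "a k = (\<Sum>i\<in>{1..m}. if i = k then xs ! (i - 1) else 0)" if "k \<in> {1..r}" for k
      unfolding xs_def sum_first_labels[OF that] using that zero[of k] False by auto
    moreover have "t \<in> {TB, TC, TD}"
      using False by (cases t) auto
    ultimately show ?thesis
      using \<open>xs \<in> \<Lambda>\<close> by blast
  qed
qed

theorem lemma2p6:
  fixes n :: nat
  assumes "n \<ge> 1"
  shows "\<exists>(R::nat) (m::nat) (\<Lambda>::nat list set).
     m \<le> R \<and> finite \<Lambda> \<and> (\<forall>xs\<in>\<Lambda>. length xs = m) \<and>
     (\<forall>t r (a::nat \<Rightarrow> nat).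
        valid_type t r \<and> r \<ge> R \<and> char_degree t r a \<le> real r ^ n \<longrightarrow>
        (t = TA \<and>
           (\<exists>xs\<in>\<Lambda>. \<exists>ys\<in>\<Lambda>. \<forall>k\<in>{1..r}.
              a k = (\<Sum>i\<in>{1..m}. if i = k then xs ! (i - 1) else 0)
                  + (\<Sum>i\<in>{1..m}. if r + 1 - i = k then ys ! (i - 1) else 0)))
        \<or> (t \<in> {TB, TC, TD} \<and>
           (\<exists>xs\<in>\<Lambda>. \<forall>k\<in>{1..r}.
              a k = (\<Sum>i\<in>{1..m}. if i = k then xs ! (i - 1) else 0))))"
proof (rule exI[of _ "(4 * n + 5) ^ (n + 1) + 1"], rule exI[of _ "n + 1"],
    rule exI[of _ "small_label_lists n"], intro conjI allI impI)
  have "n + 1 \<le> 4 * n + 5" by simp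
  also have "\<dots> \<le> (4 * n + 5) ^ (n + 1)"
    by (rule self_le_power) auto
  finally show "n + 1 \<le> (4 * n + 5) ^ (n + 1) + 1"
    by simp
  show "finite (small_label_lists n)"
    by (rule finite_small_label_lists)
  show "\<forall>xs\<in>small_label_lists n. length xs = n + 1"
    by (simp add: small_label_lists_def)
qed (intro labels_of_char_degree_le; auto)

end
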